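(* Let $K\subset K'$ be a field extension, $x=(x_1,\ldots,x_n)$, and let $M\subset K[x]^p$ be a finitely generated $K[x]$-submodule. Let $J_1,\ldots,J_p$ be subsets of $\{1,\ldots,n\}$, write $x_{J_i}=(x_k)_{k\in J_i}$, and set $A_i=K[x_{J_i}]$, $A'_i=K'[x_{J_i}]$ for $i\in\{1,\ldots,p\}$. Put $$\mathcal{N}=M\cap (A_1\times\cdots\times A_p),\qquad \mathcal{N}'=(K'[x]M)\cap(A'_1\times\cdots\times A'_p),$$ where $K'[x]M\subset K'[x]^p$ is the $K'[x]$-submodule generated by $M$. If $\hat u=\sum_{j=1}^r w_j\hat v_j\in\mathcal{N}'$ for some $w_1,\ldots,w_r\in M$ and $\hat v_1,\ldots,\hat v_r\in K'[x]$, then there exist $v_1,\ldots,v_r\in K[x]$ such that $u=\sum_{j=1}^r w_jv_j\in\mathcal{N}$ and $\min_{i\in\{1,\ldots,p\}}\operatorname{ord} u_i=\min_{i\in\{1,\ldots,p\}}\operatorname{ord}\hat u_i$.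
   Context: For a polynomial $g$ in $x$, $\operatorname{ord} g$ denotes its order, i.e. the least total degree of a monomial appearing in $g$ with nonzero coefficient ($\operatorname{ord}0=\infty$). For a vector $u=(u_1,\ldots,u_p)$, $u_i$ denotes its $i$-th component. *)

theory Defs
  imports "HOL-Library.Poly_Mapping" "HOL-Library.Extended_Nat"
begin

text \<open>Multivariate polynomials with coefficients in a field type 'a, in the variables
  x_0, x_1, x_2, ... : a polynomial is a finitely supported map from monomials
  (finitely supported exponent vectors) to coefficients.
  Multiplication is the convolution product from Poly_Mapping.\<close>

type_synonym 'a mpol = "(nat \<Rightarrow>\<^sub>0 nat) \<Rightarrow>\<^sub>0 'a"

definition subfield :: "'a::field set \<Rightarrow> bool" where
  "subfield K \<longleftrightarrow> 0 \<in> K \<and> 1 \<in> K \<and>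
     (\<forall>a\<in>K. \<forall>b\<in>K. a + b \<in> K \<and> a - b \<in> K \<and> a * b \<in> K) \<and>
     (\<forall>a\<in>K. inverse a \<in> K)"

definition polys :: "'a::field set \<Rightarrow> nat set \<Rightarrow> 'a mpol set" where
  "polys K V = {f :: 'a mpol. (\<forall>m. Poly_Mapping.lookup f m \<in> K) \<and> (\<forall>m\<in>Poly_Mapping.keys f. Poly_Mapping.keys m \<subseteq> V)}"

definition mdeg :: "(nat \<Rightarrow>\<^sub>0 nat) \<Rightarrow> nat" where
  "mdeg m = (\<Sum>k\<in>Poly_Mapping.keys m. Poly_Mapping.lookup m k)"

definition ord :: "'a::zero mpol \<Rightarrow> enat" where
  "ord f = (if f = 0 then \<infinity> else enat (Min (mdeg ` Poly_Mapping.keys f)))"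

text \<open>Vectors in R^p: maps nat \<Rightarrow> polynomial with components indexed by 0..<p,
  zero outside.  The i-th component of the paper (1-based) is component i-1 here.\<close>
definition vecs :: "'a::zero mpol set \<Rightarrow> nat \<Rightarrow> (nat \<Rightarrow> 'a mpol) set" where
  "vecs R p = {u. (\<forall>i<p. u i \<in> R) \<and> (\<forall>i\<ge>p. u i = 0)}"

definition lin_comb :: "'a::comm_ring_1 mpol set \<Rightarrow> (nat \<Rightarrow> 'a mpol) set \<Rightarrow> (nat \<Rightarrow> 'a mpol) set" where
  "lin_comb R S = {u. \<exists>r (c :: nat \<Rightarrow> 'a mpol) (g :: nat \<Rightarrow> nat \<Rightarrow> 'a mpol).
      (\<forall>j<r. c j \<in> R \<and> g j \<in> S) \<and> u = (\<lambda>i. \<Sum>j<r. g j i * c j)}"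

definition fg_submodule :: "'a::comm_ring_1 mpol set \<Rightarrow> nat \<Rightarrow> (nat \<Rightarrow> 'a mpol) set \<Rightarrow> bool" where
  "fg_submodule R p M \<longleftrightarrow> (\<exists>G. finite G \<and> G \<subseteq> vecs R p \<and> M = lin_comb R G)"

end

theory Submission
  imports Defs
begin

text \<open>Fix a component i0 and a monomial m0 of minimal degree d in the given
  combination. Asking that a combination of the w_j have no coefficients outside the
  monomials in the variables J_i, none of degree below d, and coefficient 1 at (i0, m0)
  is a system of linear equations in the coefficients of the v_j, whose coefficients lie
  in K. The given v-hat_j, rescaled, solve it over K', so Gaussian elimination yields a
  solution over K, and any such solution has the required order d.\<close>

lemma subfield_0_1: "subfield K \<Longrightarrow> 0 \<in> K \<and> 1 \<in> K"
  by (simp add: subfield_def)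

lemma subfield_closed:
  assumes "subfield K" "a \<in> K" "b \<in> K"
  shows "a + b \<in> K" "a - b \<in> K" "a * b \<in> K" "a / b \<in> K"
  using assms by (auto simp: subfield_def divide_inverse)

lemma subfield_sum:
  assumes "subfield K" "\<And>x. x \<in> A \<Longrightarrow> f x \<in> K"
  shows "sum f A \<in> K"
  using assms(2)
  by (induction A rule: infinite_finite_induct) (auto simp: subfield_0_1[OF assms(1)] subfield_closed[OF assms(1)])

lemma linear_system_eliminate_pivot:
  fixes a :: "'e \<Rightarrow> 't \<Rightarrow> 'a::field"
  assumes "finite T" "s \<notin> T" "e0 \<in> E" "a e0 s \<noteq> 0"
  shows "(\<forall>e\<in>E. (\<Sum>t\<in>insert s T. a e t * x t) = c e) \<longleftrightarrow>
    (\<forall>e\<in>E. (\<Sum>t\<in>T. (a e t - a e s * a e0 t / a e0 s) * x t) = c e - a e s * c e0 / a e0 s) \<and>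
    x s = (c e0 - (\<Sum>t\<in>T. a e0 t * x t)) / a e0 s"
proof -
  have insert: "(\<Sum>t\<in>insert s T. a e t * x t) = a e s * x s + (\<Sum>t\<in>T. a e t * x t)" for e
    using assms(1,2) by simp
  have reduced: "(\<Sum>t\<in>T. (a e t - a e s * a e0 t / a e0 s) * x t) =
      (\<Sum>t\<in>T. a e t * x t) - a e s / a e0 s * (\<Sum>t\<in>T. a e0 t * x t)" for e
    by (simp add: algebra_simps sum_subtractf sum_distrib_left)
  define sol where "sol = (c e0 - (\<Sum>t\<in>T. a e0 t * x t)) / a e0 s"
  have pivot_eq: "a e0 s * x s + (\<Sum>t\<in>T. a e0 t * x t) = c e0 \<longleftrightarrow> x s = sol"
    using assms(4) by (auto simp: sol_def field_simps)
  have "a e s * sol + (\<Sum>t\<in>T. a e t * x t) = c e \<longleftrightarrow>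
      (\<Sum>t\<in>T. a e t * x t) - a e s / a e0 s * (\<Sum>t\<in>T. a e0 t * x t) = c e - a e s * c e0 / a e0 s" for e
    using assms(4) by (auto simp: sol_def field_simps)
  then show ?thesis
    unfolding insert reduced sol_def[symmetric] using assms(3) pivot_eq by auto
qed

lemma subfield_linear_system_solvable:
  fixes K :: "'a::field set" and a :: "'e \<Rightarrow> 't \<Rightarrow> 'a"
  assumes "finite T" "subfield K"
    and "\<forall>e\<in>E. \<forall>t\<in>T. a e t \<in> K" "\<forall>e\<in>E. c e \<in> K"
    and "\<forall>e\<in>E. (\<Sum>t\<in>T. a e t * y t) = c e"
  shows "\<exists>z. (\<forall>t\<in>T. z t \<in> K) \<and> (\<forall>e\<in>E. (\<Sum>t\<in>T. a e t * z t) = c e)"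
  using assms
proof (induction T arbitrary: a c y rule: finite_induct)
  case empty
  then show ?case by auto
next
  case (insert s T)
  note closed = subfield_closed[OF \<open>subfield K\<close>]
  show ?case
  proof (cases "\<exists>e0\<in>E. a e0 s \<noteq> 0")
    case False
    then have "\<forall>e\<in>E. (\<Sum>t\<in>T. a e t * y t) = c e"
      using insert.prems(4) insert.hyps by auto
    then obtain z where z: "\<forall>t\<in>T. z t \<in> K" "\<forall>e\<in>E. (\<Sum>t\<in>T. a e t * z t) = c e"
      using insert.IH[of a c y] insert.prems by auto
    have "(\<Sum>t\<in>T. a e t * (z(s := 0)) t) = (\<Sum>t\<in>T. a e t * z t)" for e
      using insert.hyps by (intro sum.cong) auto
    then show ?thesis
      using z False insert.hyps subfield_0_1[OF \<open>subfield K\<close>] by (intro exI[of _ "z(s := 0)"]) auto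
  next
    case True
    then obtain e0 where e0: "e0 \<in> E" "a e0 s \<noteq> 0" by blast
    note elim = linear_system_eliminate_pivot[where a = a, OF insert.hyps e0]
    obtain z where z: "\<forall>t\<in>T. z t \<in> K"
        "\<forall>e\<in>E. (\<Sum>t\<in>T. (a e t - a e s * a e0 t / a e0 s) * z t) = c e - a e s * c e0 / a e0 s"
      using insert.IH[of "\<lambda>e t. a e t - a e s * a e0 t / a e0 s" "\<lambda>e. c e - a e s * c e0 / a e0 s" y]
        elim[where c = c and x = y] insert.prems e0 by (auto intro!: closed)
    define z' where "z' = z(s := (c e0 - (\<Sum>t\<in>T. a e0 t * z t)) / a e0 s)"
    have "(\<Sum>t\<in>T. f t * z' t) = (\<Sum>t\<in>T. f t * z t)" for f
      using insert.hyps by (auto simp: z'_def intro!: sum.cong)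
    then have "\<forall>e\<in>E. (\<Sum>t\<in>insert s T. a e t * z' t) = c e"
      using elim[where c = c and x = z'] z(2) by (simp add: z'_def)
    moreover have "\<forall>t\<in>insert s T. z' t \<in> K"
      using z insert.prems e0 by (auto simp: z'_def intro!: closed subfield_sum[OF \<open>subfield K\<close>])
    ultimately show ?thesis by blast
  qed
qed

lemma polys_0: "subfield K \<Longrightarrow> 0 \<in> polys K V"
  by (simp add: polys_def subfield_def)

lemma polys_add: "subfield K \<Longrightarrow> f \<in> polys K V \<Longrightarrow> g \<in> polys K V \<Longrightarrow> f + g \<in> polys K V"
  unfolding polys_def subfield_def using keys_add[of f g] by (auto simp: lookup_add) blast

lemma polys_sum:
  assumes "subfield K" "\<And>x. x \<in> A \<Longrightarrow> f x \<in> polys K V"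
  shows "sum f A \<in> polys K V"
  using assms(2)
  by (induction A rule: infinite_finite_induct) (auto simp: polys_0[OF assms(1)] polys_add[OF assms(1)])

lemma polys_single:
  "subfield K \<Longrightarrow> c \<in> K \<Longrightarrow> Poly_Mapping.keys m \<subseteq> V \<Longrightarrow> Poly_Mapping.single m c \<in> polys K V"
  unfolding polys_def subfield_def by (auto simp: lookup_single when_def)

lemma polys_mono: "V \<subseteq> W \<Longrightarrow> polys K V \<subseteq> polys K W"
  by (auto simp: polys_def)

lemma lookup_eq_0_if_not_polys_keys:
  "f \<in> polys K V \<Longrightarrow> \<not> Poly_Mapping.keys m \<subseteq> V \<Longrightarrow> Poly_Mapping.lookup f m = 0"
  by (auto simp: polys_def in_keys_iff)

lemma polys_restrict:
  assumes "f \<in> polys K U" "\<And>m. \<not> Poly_Mapping.keys m \<subseteq> V \<Longrightarrow> Poly_Mapping.lookup f m = 0"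
  shows "f \<in> polys K V"
  using assms by (auto simp: polys_def in_keys_iff)

lemma sum_single_lookup:
  assumes "finite S" "Poly_Mapping.keys f \<subseteq> S"
  shows "(\<Sum>m\<in>S. Poly_Mapping.single m (Poly_Mapping.lookup f m)) = f"
proof (rule poly_mapping_eqI)
  fix k
  have "Poly_Mapping.lookup (\<Sum>m\<in>S. Poly_Mapping.single m (Poly_Mapping.lookup f m)) k =
      (\<Sum>m\<in>S. (Poly_Mapping.lookup f m when m = k))"
    by (simp add: lookup_sum lookup_single)
  also have "\<dots> = Poly_Mapping.lookup f k"
    using assms by (auto simp: when_def in_keys_iff)
  finally show "Poly_Mapping.lookup (\<Sum>m\<in>S. Poly_Mapping.single m (Poly_Mapping.lookup f m)) k =
      Poly_Mapping.lookup f k" .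
qed

lemma polys_mult:
  assumes K: "subfield K" and f: "f \<in> polys K V" and g: "g \<in> polys K V"
  shows "f * g \<in> polys K V"
proof -
  let ?monos = "\<lambda>h. \<Sum>k\<in>Poly_Mapping.keys h. Poly_Mapping.single k (Poly_Mapping.lookup h k)"
  have "f * g = ?monos f * ?monos g"
    by (simp add: sum_single_lookup)
  also have "\<dots> = (\<Sum>k\<in>Poly_Mapping.keys f. \<Sum>l\<in>Poly_Mapping.keys g.
      Poly_Mapping.single (k + l) (Poly_Mapping.lookup f k * Poly_Mapping.lookup g l))"
    by (simp add: sum_distrib_left sum_distrib_right mult_single) (rule sum.swap)
  finally have expansion: "f * g = \<dots>" .
  have "Poly_Mapping.keys (k + l) \<subseteq> V"
    if "k \<in> Poly_Mapping.keys f" "l \<in> Poly_Mapping.keys g" for k l :: "nat \<Rightarrow>\<^sub>0 nat"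
    using keys_add[of k l] f g that unfolding polys_def by blast
  moreover have "Poly_Mapping.lookup f k * Poly_Mapping.lookup g l \<in> K" for k l
    using f g K by (auto simp: polys_def subfield_def)
  ultimately show ?thesis
    unfolding expansion by (intro polys_sum[OF K] polys_single[OF K]) auto
qed

lemma lookup_mult_single:
  fixes f :: "'b::comm_monoid_add \<Rightarrow>\<^sub>0 'a::comm_ring_1"
  shows "Poly_Mapping.lookup (f * Poly_Mapping.single m c) k =
    Poly_Mapping.lookup (f * Poly_Mapping.single m 1) k * c"
proof -
  have "f * Poly_Mapping.single m c = Poly_Mapping.map ((*) c) (f * Poly_Mapping.single m 1)"
    by (simp add: mult_map_scale_conv_mult mult_single mult.commute mult.left_commute)
  then show ?thesis by (simp add: map.rep_eq when_def mult.commute)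
qed

lemma ord_le_mdeg: "m \<in> Poly_Mapping.keys f \<Longrightarrow> ord f \<le> enat (mdeg m)"
  by (auto simp: ord_def)

lemma enat_le_ord_iff: "enat d \<le> ord f \<longleftrightarrow> (\<forall>m\<in>Poly_Mapping.keys f. d \<le> mdeg m)"
  by (auto simp: ord_def Min_ge_iff)

lemma INF_ord_attained:
  assumes "finite A" "(INF i\<in>A. ord (f i)) \<noteq> \<infinity>"
  shows "\<exists>i\<in>A. \<exists>m\<in>Poly_Mapping.keys (f i). (INF i\<in>A. ord (f i)) = enat (mdeg m)"
proof -
  have "A \<noteq> {}" using assms(2) by (auto simp: top_enat_def[symmetric])
  then have "(INF i\<in>A. ord (f i)) \<in> (\<lambda>i. ord (f i)) ` A"
    using assms(1) by (simp add: cInf_eq_Min)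
  then obtain i where i: "i \<in> A" "(INF i\<in>A. ord (f i)) = ord (f i)"
    by auto
  then have "f i \<noteq> 0" using assms(2) by (auto simp: ord_def)
  then have "Min (mdeg ` Poly_Mapping.keys (f i)) \<in> mdeg ` Poly_Mapping.keys (f i)"
    by (intro Min_in) auto
  then obtain m where "m \<in> Poly_Mapping.keys (f i)" "Min (mdeg ` Poly_Mapping.keys (f i)) = mdeg m"
    by blast
  then show ?thesis using i \<open>f i \<noteq> 0\<close> by (auto simp: ord_def)
qed

lemma lin_comb_zero: "(\<lambda>i. 0) \<in> lin_comb R S"
  unfolding lin_comb_def by (rule CollectI, rule exI[of _ 0]) auto

lemma lin_comb_add:
  fixes R :: "'a::comm_ring_1 mpol set"
  assumes "u \<in> lin_comb R S" "u' \<in> lin_comb R S"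
  shows "(\<lambda>i. u i + u' i) \<in> lin_comb R S"
proof -
  obtain r and c :: "nat \<Rightarrow> 'a mpol" and g
    where u: "\<forall>j<r. c j \<in> R \<and> g j \<in> S" "u = (\<lambda>i. \<Sum>j<r. g j i * c j)"
    using assms(1) unfolding lin_comb_def by blast
  obtain r' and c' :: "nat \<Rightarrow> 'a mpol" and g'
    where u': "\<forall>j<r'. c' j \<in> R \<and> g' j \<in> S" "u' = (\<lambda>i. \<Sum>j<r'. g' j i * c' j)"
    using assms(2) unfolding lin_comb_def by blast
  define C where "C j = (if j < r then c j else c' (j - r))" for j
  define G where "G j = (if j < r then g j else g' (j - r))" for j
  have "\<forall>j<r + r'. C j \<in> R \<and> G j \<in> S"
    using u u' by (auto simp: C_def G_def)
  moreover have "(\<lambda>i. u i + u' i) = (\<lambda>i. \<Sum>j<r + r'. G j i * C j)"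
  proof
    fix i
    have "(\<Sum>j<r + r'. G j i * C j) = (\<Sum>j<r. G j i * C j) + (\<Sum>j<r'. G (r + j) i * C (r + j))"
      by (induction r') (simp_all add: ac_simps)
    then show "u i + u' i = (\<Sum>j<r + r'. G j i * C j)"
      using u u' by (simp add: C_def G_def)
  qed
  ultimately show ?thesis unfolding lin_comb_def by blast
qed

lemma lin_comb_mult:
  fixes R :: "'a::comm_ring_1 mpol set"
  assumes "u \<in> lin_comb R S" "\<forall>a\<in>R. \<forall>b\<in>R. a * b \<in> R" "v \<in> R"
  shows "(\<lambda>i. u i * v) \<in> lin_comb R S"
proof -
  obtain r and c :: "nat \<Rightarrow> 'a mpol" and g
    where u: "\<forall>j<r. c j \<in> R \<and> g j \<in> S" "u = (\<lambda>i. \<Sum>j<r. g j i * c j)"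
    using assms(1) unfolding lin_comb_def by blast
  have "\<forall>j<r. c j * v \<in> R \<and> g j \<in> S"
    using u assms by auto
  moreover have "(\<lambda>i. u i * v) = (\<lambda>i. \<Sum>j<r. g j i * (c j * v))"
    using u by (simp add: sum_distrib_right mult.assoc)
  ultimately show ?thesis
    unfolding lin_comb_def by (intro CollectI exI[of _ r] exI[of _ "\<lambda>j. c j * v"] exI[of _ g]) auto
qed

lemma lin_comb_sum:
  fixes R :: "'a::comm_ring_1 mpol set" and r :: nat
  assumes "\<forall>j<r. w j \<in> lin_comb R S" "\<forall>j<r. v j \<in> R" "\<forall>a\<in>R. \<forall>b\<in>R. a * b \<in> R"
  shows "(\<lambda>i. \<Sum>j<r. w j i * v j) \<in> lin_comb R S"
  using assms
proof (induction r)
  case 0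
  then show ?case using lin_comb_zero by simp
next
  case (Suc r)
  have "(\<lambda>i. \<Sum>j<r. w j i * v j) \<in> lin_comb R S" "(\<lambda>i. w r i * v r) \<in> lin_comb R S"
    using Suc by (auto intro: lin_comb_mult)
  then show ?case using lin_comb_add by fastforce
qed

lemma fg_submodule_subset_vecs:
  fixes K :: "'a::field set"
  assumes K: "subfield K" and M: "fg_submodule (polys K V) p M"
  shows "M \<subseteq> vecs (polys K V) p"
proof
  fix u assume "u \<in> M"
  then obtain G r and c :: "nat \<Rightarrow> 'a mpol" and g
    where G: "G \<subseteq> vecs (polys K V) p"
      and u: "\<forall>j<r. c j \<in> polys K V \<and> g j \<in> G" "u = (\<lambda>i. \<Sum>j<r. g j i * c j)"
    using M unfolding fg_submodule_def lin_comb_def by blast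
  have "u i \<in> polys K V" if "i < p" for i
    using u G that by (auto intro!: polys_sum[OF K] polys_mult[OF K] simp: vecs_def)
  moreover have "u i = 0" if "i \<ge> p" for i
  proof -
    have "\<forall>j<r. g j i = 0" using u G that by (auto simp: vecs_def)
    then show ?thesis using u by simp
  qed
  ultimately show "u \<in> vecs (polys K V) p" by (simp add: vecs_def)
qed

lemma fg_submodule_component:
  assumes "subfield K" "fg_submodule (polys K V) p M" "u \<in> M"
  shows "u i \<in> polys K V"
  using fg_submodule_subset_vecs[OF assms(1,2)] assms(3) polys_0[OF assms(1)]
  by (cases "i < p") (auto simp: vecs_def)

lemma fg_submodule_combination:
  fixes r :: nat
  assumes K: "subfield K" and M: "fg_submodule (polys K V) p M"
    and "\<forall>j<r. w j \<in> M" "\<forall>j<r. v j \<in> polys K V"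
  shows "(\<lambda>i. \<Sum>j<r. w j i * v j) \<in> M"
proof -
  obtain G where M_eq: "M = lin_comb (polys K V) G"
    using M by (auto simp: fg_submodule_def)
  show ?thesis
    using assms(3,4) unfolding M_eq by (intro lin_comb_sum) (auto intro: polys_mult[OF K])
qed

lemma lookup_sum_mult_sum_single:
  fixes w :: "nat \<Rightarrow> 'b::comm_monoid_add \<Rightarrow>\<^sub>0 'a::comm_ring_1"
  shows "Poly_Mapping.lookup (\<Sum>j<r. w j * (\<Sum>m\<in>S. Poly_Mapping.single m (z (j, m)))) k =
    (\<Sum>(j, m)\<in>{..<r} \<times> S. Poly_Mapping.lookup (w j * Poly_Mapping.single m 1) k * z (j, m))"
  by (subst lookup_mult_single[symmetric])
    (simp add: sum_distrib_left lookup_sum sum.cartesian_product split_beta)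

lemma lookup_eq_0_if_mdeg_less:
  "enat d \<le> ord f \<Longrightarrow> mdeg m < d \<Longrightarrow> Poly_Mapping.lookup f m = 0"
  by (metis enat_le_ord_iff in_keys_iff leD)

lemma INF_ord_eqI:
  assumes "i0 \<in> A" "m0 \<in> Poly_Mapping.keys (f i0)"
    and "\<And>i m. i \<in> A \<Longrightarrow> m \<in> Poly_Mapping.keys (f i) \<Longrightarrow> mdeg m0 \<le> mdeg m"
  shows "(INF i\<in>A. ord (f i)) = enat (mdeg m0)"
proof (rule antisym)
  show "(INF i\<in>A. ord (f i)) \<le> enat (mdeg m0)"
    using assms(1,2) by (auto intro: INF_lower2 ord_le_mdeg)
  show "enat (mdeg m0) \<le> (INF i\<in>A. ord (f i))"
    using assms(3) by (auto intro: INF_greatest simp: enat_le_ord_iff)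
qed

lemma subfield_combination_exists:
  fixes K :: "'a::field set" and w :: "nat \<Rightarrow> nat \<Rightarrow> 'a mpol" and vh :: "nat \<Rightarrow> 'a mpol"
  assumes K: "subfield K"
    and w: "\<forall>j<r. \<forall>i. w j i \<in> polys K UNIV"
    and vh: "\<forall>j<r. vh j \<in> polys UNIV V"
    and vanish: "\<forall>(i, m)\<in>Z. Poly_Mapping.lookup (\<Sum>j<r. w j i * vh j) m = 0"
    and nonzero: "Poly_Mapping.lookup (\<Sum>j<r. w j i0 * vh j) m0 \<noteq> 0"
  shows "\<exists>v. (\<forall>j<r. v j \<in> polys K V) \<and>
    (\<forall>(i, m)\<in>Z. Poly_Mapping.lookup (\<Sum>j<r. w j i * v j) m = 0) \<and>
    Poly_Mapping.lookup (\<Sum>j<r. w j i0 * v j) m0 = 1"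
proof -
  define S where "S = (\<Union>j<r. Poly_Mapping.keys (vh j))"
  define T where "T = {..<r} \<times> S"
  define poly_of where "poly_of z j = (\<Sum>m\<in>S. Poly_Mapping.single m (z (j, m)))"
    for z :: "nat \<times> (nat \<Rightarrow>\<^sub>0 nat) \<Rightarrow> 'a" and j
  define a where "a = (\<lambda>(i, k) (j, m). Poly_Mapping.lookup (w j i * Poly_Mapping.single m 1) k)"
  have coeff: "Poly_Mapping.lookup (\<Sum>j<r. w j i * poly_of z j) k = (\<Sum>t\<in>T. a (i, k) t * z t)" for z i k
    unfolding poly_of_def a_def T_def by (simp add: lookup_sum_mult_sum_single[of "\<lambda>j. w j i"] split_beta)
  define c0 where "c0 = Poly_Mapping.lookup (\<Sum>j<r. w j i0 * vh j) m0"
  define E where "E = insert (i0, m0) Z"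
  define c :: "nat \<times> (nat \<Rightarrow>\<^sub>0 nat) \<Rightarrow> 'a" where "c e = (if e = (i0, m0) then 1 else 0)" for e
  define y0 where "y0 = (\<lambda>(j, m). Poly_Mapping.lookup (vh j) m)"
  define y where "y t = y0 t / c0" for t
  have "poly_of y0 j = vh j" if "j < r" for j
    unfolding poly_of_def y0_def using that by (simp, intro sum_single_lookup) (auto simp: S_def)
  then have "Poly_Mapping.lookup (\<Sum>j<r. w j i * vh j) k = (\<Sum>t\<in>T. a (i, k) t * y0 t)" for i k
    by (simp flip: coeff)
  then have "(\<Sum>t\<in>T. a (i, k) t * y t) = Poly_Mapping.lookup (\<Sum>j<r. w j i * vh j) k / c0" for i k
    by (simp add: y_def sum_divide_distrib)
  then have system: "\<forall>e\<in>E. (\<Sum>t\<in>T. a e t * y t) = c e"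
    using vanish nonzero by (auto simp: E_def c_def c0_def)
  have "w j i * Poly_Mapping.single m 1 \<in> polys K UNIV" if "j < r" for j i m
    using w that subfield_0_1[OF K] by (auto intro: polys_mult[OF K] polys_single[OF K])
  then have a_in_K: "\<forall>e\<in>E. \<forall>t\<in>T. a e t \<in> K"
    by (auto simp: a_def T_def polys_def)
  have c_in_K: "\<forall>e\<in>E. c e \<in> K"
    using subfield_0_1[OF K] by (simp add: c_def)
  have "finite T"
    by (simp add: T_def S_def)
  then obtain z where z: "\<forall>t\<in>T. z t \<in> K" "\<forall>e\<in>E. (\<Sum>t\<in>T. a e t * z t) = c e"
    using subfield_linear_system_solvable[OF _ K a_in_K c_in_K system] by blast
  have "Poly_Mapping.keys m \<subseteq> V" if "m \<in> S" for m
    using vh that by (auto simp: S_def polys_def)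
  then have "\<forall>j<r. poly_of z j \<in> polys K V"
    using z(1) unfolding poly_of_def T_def by (auto intro!: polys_sum[OF K] polys_single[OF K])
  moreover have "(i0, m0) \<notin> Z"
    using vanish nonzero by auto
  ultimately show ?thesis
    using z(2) by (intro exI[of _ "poly_of z"]) (auto simp: coeff E_def c_def)
qed

lemma subfield_combination_preserving_order:
  fixes K :: "'a::field set" and w :: "nat \<Rightarrow> nat \<Rightarrow> 'a mpol" and vh :: "nat \<Rightarrow> 'a mpol"
  assumes K: "subfield K"
    and w: "\<forall>j<r. \<forall>i. w j i \<in> polys K UNIV"
    and vh: "\<forall>j<r. vh j \<in> polys UNIV V"
    and uh: "\<forall>i<p. (\<Sum>j<r. w j i * vh j) \<in> polys UNIV (J i)"
  shows "\<exists>v. (\<forall>j<r. v j \<in> polys K V) \<and> (\<forall>i<p. (\<Sum>j<r. w j i * v j) \<in> polys K (J i)) \<and>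
    (INF i\<in>{..<p}. ord (\<Sum>j<r. w j i * v j)) = (INF i\<in>{..<p}. ord (\<Sum>j<r. w j i * vh j))"
proof (cases "(INF i\<in>{..<p}. ord (\<Sum>j<r. w j i * vh j)) = \<infinity>")
  case True
  then show ?thesis
    using polys_0[OF K]
    by (intro exI[of _ "\<lambda>j. 0"]) (auto simp: ord_def top_enat_def[symmetric])
next
  case False
  then obtain i0 m0 where i0: "i0 < p" "m0 \<in> Poly_Mapping.keys (\<Sum>j<r. w j i0 * vh j)"
    and d: "(INF i\<in>{..<p}. ord (\<Sum>j<r. w j i * vh j)) = enat (mdeg m0)"
    using INF_ord_attained[of "{..<p}" "\<lambda>i. \<Sum>j<r. w j i * vh j"] by auto
  define Z where "Z = {(i, m). i < p \<and> (\<not> Poly_Mapping.keys m \<subseteq> J i \<or> mdeg m < mdeg m0)}"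
  have "enat (mdeg m0) \<le> ord (\<Sum>j<r. w j i * vh j)" if "i < p" for i
    using that by (auto simp flip: d intro: INF_lower)
  then have "\<forall>(i, m)\<in>Z. Poly_Mapping.lookup (\<Sum>j<r. w j i * vh j) m = 0"
    using uh by (auto simp: Z_def intro: lookup_eq_0_if_mdeg_less lookup_eq_0_if_not_polys_keys)
  moreover have "Poly_Mapping.lookup (\<Sum>j<r. w j i0 * vh j) m0 \<noteq> 0"
    using i0 by (simp add: in_keys_iff)
  ultimately obtain v where v: "\<forall>j<r. v j \<in> polys K V"
    "\<forall>(i, m)\<in>Z. Poly_Mapping.lookup (\<Sum>j<r. w j i * v j) m = 0"
    "Poly_Mapping.lookup (\<Sum>j<r. w j i0 * v j) m0 = 1"
    using subfield_combination_exists[OF K w vh, of Z i0 m0] by blast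
  define u where "u i = (\<Sum>j<r. w j i * v j)" for i
  have u_vanish: "Poly_Mapping.lookup (u i) m = 0"
    if "i < p" "\<not> Poly_Mapping.keys m \<subseteq> J i \<or> mdeg m < mdeg m0" for i m
    using v(2) that by (auto simp: Z_def u_def)
  have "u i \<in> polys K (J i)" if "i < p" for i
  proof (rule polys_restrict)
    have "v j \<in> polys K UNIV" if "j < r" for j
      using v(1) that polys_mono[of V UNIV K] by blast
    then show "u i \<in> polys K UNIV"
      using w by (auto simp: u_def intro!: polys_sum[OF K] polys_mult[OF K])
  qed (use u_vanish that in blast)
  moreover have "(INF i\<in>{..<p}. ord (u i)) = enat (mdeg m0)"
  proof (rule INF_ord_eqI)
    show "m0 \<in> Poly_Mapping.keys (u i0)"
      using v(3) by (simp add: in_keys_iff u_def)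
  qed (use i0(1) u_vanish in \<open>auto simp: in_keys_iff not_less[symmetric]\<close>)
  ultimately show ?thesis
    using v(1) d by (intro exI[of _ v]) (auto simp: u_def)
qed

theorem proposition1p1:
  fixes K :: "'a::field set" and n p r :: nat
    and M :: "(nat \<Rightarrow> 'a mpol) set" and J :: "nat \<Rightarrow> nat set"
    and w :: "nat \<Rightarrow> nat \<Rightarrow> 'a mpol" and vh :: "nat \<Rightarrow> 'a mpol"
  assumes K: "subfield K"
    and M: "fg_submodule (polys K {..<n}) p M"
    and J: "\<forall>i<p. J i \<subseteq> {..<n}"
    and w: "\<forall>j<r. w j \<in> M"
    and vh: "\<forall>j<r. vh j \<in> polys UNIV {..<n}"
    and uh: "(\<lambda>i. \<Sum>j<r. w j i * vh j) \<in> lin_comb (polys UNIV {..<n}) M \<inter>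
               {u. \<forall>i<p. u i \<in> polys UNIV (J i)}"
  shows "\<exists>v. (\<forall>j<r. v j \<in> polys K {..<n}) \<and>
     (\<lambda>i. \<Sum>j<r. w j i * v j) \<in> M \<inter> {u. \<forall>i<p. u i \<in> polys K (J i)} \<and>
     (INF i\<in>{..<p}. ord (\<Sum>j<r. w j i * v j)) = (INF i\<in>{..<p}. ord (\<Sum>j<r. w j i * vh j))"
proof -
  have "\<forall>j<r. \<forall>i. w j i \<in> polys K UNIV"
    using w fg_submodule_component[OF K M] polys_mono[of "{..<n}" UNIV K] by blast
  moreover have "\<forall>i<p. (\<Sum>j<r. w j i * vh j) \<in> polys UNIV (J i)"
    using uh by simp
  ultimately obtain v where v: "\<forall>j<r. v j \<in> polys K {..<n}"
    "\<forall>i<p. (\<Sum>j<r. w j i * v j) \<in> polys K (J i)"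
    "(INF i\<in>{..<p}. ord (\<Sum>j<r. w j i * v j)) = (INF i\<in>{..<p}. ord (\<Sum>j<r. w j i * vh j))"
    using subfield_combination_preserving_order[OF K _ vh] by blast
  then show ?thesis
    using fg_submodule_combination[OF K M w v(1)] by blast
qed

end
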